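(* Let $m\ge 0$ be an integer and $\mathbf{X},\mathbf{Y}\in\{0,1\}^{m\times m}$. Then $\mathbb{D}_{1,0}(\mathbf{X})\cap\mathbb{D}_{1,0}(\mathbf{Y})\neq\emptyset$ if and only if $\mathbb{I}_{1,0}(\mathbf{X})\cap\mathbb{I}_{1,0}(\mathbf{Y})\neq\emptyset$; and $\mathbb{D}_{0,1}(\mathbf{X})\cap\mathbb{D}_{0,1}(\mathbf{Y})\neq\emptyset$ if and only if $\mathbb{I}_{0,1}(\mathbf{X})\cap\mathbb{I}_{0,1}(\mathbf{Y})\neq\emptyset$.
   Context: For a binary array $\mathbf{X}$, $\mathbb{D}_{t_r,t_c}(\mathbf{X})$ denotes the set of all arrays obtained from $\mathbf{X}$ by deleting any $t_r$ rows and any $t_c$ columns, and $\mathbb{I}_{t_r,t_c}(\mathbf{X})$ the set of all binary arrays obtained from $\mathbf{X}$ by inserting $t_r$ rows and $t_c$ columns (arbitrary binary content, arbitrary positions). *)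

theory Defs
  imports Main
begin

type_synonym barray = "bool list list"

definition nrows :: "barray \<Rightarrow> nat" where
  "nrows X = length X"

definition ncols :: "barray \<Rightarrow> nat" where
  "ncols X = (if X = [] then 0 else length (hd X))"

definition is_array :: "nat \<Rightarrow> nat \<Rightarrow> barray \<Rightarrow> bool" where
  "is_array m n X \<longleftrightarrow> length X = m \<and> (\<forall>r\<in>set X. length r = n)"

definition del_rc :: "nat set \<Rightarrow> nat set \<Rightarrow> barray \<Rightarrow> barray" where
  "del_rc R C X = map (\<lambda>r. nths r (- C)) (nths X (- R))"

definition Del :: "nat \<Rightarrow> nat \<Rightarrow> barray \<Rightarrow> barray set" where
  "Del tr tc X = {del_rc R C X | R C.
      R \<subseteq> {..<nrows X} \<and> card R = tr \<and> C \<subseteq> {..<ncols X} \<and> card C = tc}"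

text \<open>I_{tr,tc}(X): all binary arrays obtained by inserting tr rows and tc columns
  (arbitrary content and positions), i.e. all (rows+tr) x (cols+tc) arrays Z from
  which X arises by deleting tr rows and tc columns.\<close>
definition Ins :: "nat \<Rightarrow> nat \<Rightarrow> barray \<Rightarrow> barray set" where
  "Ins tr tc X = {Z. is_array (nrows X + tr) (ncols X + tc) Z \<and> X \<in> Del tr tc Z}"

end

theory Submission
  imports Defs
begin

(* Deleting one entry from each of two lists of equal length yields the same list exactly
   when both lists arise by deleting one entry from a common list.  If deleting position i
   of xs and position j >= i of ys agree, then take (Suc j) xs @ drop j ys is such a common
   list; conversely, two deletions from a common list commute, so one further deletion on
   each side reaches a common list.  Row operations act on the list of rows; for columns
   the same construction is applied to every row, which works because the positions
   involved do not depend on the row. *)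

definition remove_nth :: "nat \<Rightarrow> 'a list \<Rightarrow> 'a list" where
  "remove_nth i xs = take i xs @ drop (Suc i) xs"

lemma nths_Compl_singleton: "nths xs (- {i}) = remove_nth i xs"
proof (induction xs arbitrary: i)
  case Nil
  then show ?case by (simp add: remove_nth_def)
next
  case (Cons x xs)
  then show ?case
    by (cases i) (simp_all add: nths_Cons remove_nth_def nths_all Compl_eq flip: Collect_neg_eq)
qed

lemma remove_nth_commute:
  assumes "i < j" "j < length xs"
  shows "remove_nth (j - 1) (remove_nth i xs) = remove_nth i (remove_nth j xs)"
  using assms by (simp add: remove_nth_def drop_take)

lemma remove_nth_confluent:
  assumes "i < Suc n" "j < Suc n" "n \<noteq> 0"
  obtains i' j' where "i' < n" "j' < n"
    "\<And>xs. length xs = Suc n \<Longrightarrow> remove_nth i' (remove_nth i xs) = remove_nth j' (remove_nth j xs)"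
proof -
  consider "i = j" | "i < j" | "j < i" by linarith
  then show thesis
  proof cases
    case 1
    then show thesis using that[of 0 0] assms(3) by simp
  next
    case 2
    show thesis
    proof (rule that[of "j - 1" i])
      show "remove_nth (j - 1) (remove_nth i xs) = remove_nth i (remove_nth j xs)"
        if "length xs = Suc n" for xs
        using remove_nth_commute[of i j xs] 2 assms(2) that by simp
    qed (use 2 assms(2) in auto)
  next
    case 3
    show thesis
    proof (rule that[of j "i - 1"])
      show "remove_nth j (remove_nth i xs) = remove_nth (i - 1) (remove_nth j xs)"
        if "length xs = Suc n" for xs
        using remove_nth_commute[of j i xs] 3 assms(1) that by simp
    qed (use 3 assms(1) in auto)
  qed
qed

lemma remove_nth_take_Suc_append_drop:
  assumes "i \<le> j" "j < length xs" "length xs = length ys" "remove_nth i xs = remove_nth j ys"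
  shows "remove_nth (Suc j) (take (Suc j) xs @ drop j ys) = xs"
    and "remove_nth i (take (Suc j) xs @ drop j ys) = ys"
proof -
  have "drop j (remove_nth i xs) = drop j (remove_nth j ys)" using assms(4) by simp
  then have "drop (Suc j) xs = drop (Suc j) ys"
    using assms(1-3) by (simp add: remove_nth_def drop_append)
  then show "remove_nth (Suc j) (take (Suc j) xs @ drop j ys) = xs"
    using assms(2) by (simp add: remove_nth_def) (metis append_take_drop_id)
  have "take j (remove_nth i xs) = take j (remove_nth j ys)" using assms(4) by simp
  then have "take i xs @ take (j - i) (drop (Suc i) xs) = take j ys"
    using assms(1-3) by (simp add: remove_nth_def)
  then show "remove_nth i (take (Suc j) xs @ drop j ys) = ys"
    using assms(1-3) by (simp add: remove_nth_def drop_take) (metis append.assoc append_take_drop_id)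
qed

lemma del_rc_row: "del_rc {i} {} X = remove_nth i X"
  by (simp add: del_rc_def nths_Compl_singleton nths_all)

lemma del_rc_column: "del_rc {} {j} X = map (remove_nth j) X"
  by (simp add: del_rc_def nths_Compl_singleton nths_all)

lemma subset_lessThan_card_eq_0_iff: "C \<subseteq> {..<n::nat} \<Longrightarrow> card C = 0 \<longleftrightarrow> C = {}"
  by (meson card_0_eq finite_lessThan finite_subset)

lemma Del_1_0: "Del 1 0 X = (\<lambda>i. remove_nth i X) ` {..<nrows X}"
proof
  show "Del 1 0 X \<subseteq> (\<lambda>i. remove_nth i X) ` {..<nrows X}"
    by (auto simp: Del_def subset_lessThan_card_eq_0_iff card_1_singleton_iff del_rc_row)
  show "(\<lambda>i. remove_nth i X) ` {..<nrows X} \<subseteq> Del 1 0 X"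
  proof (rule image_subsetI)
    fix i assume "i \<in> {..<nrows X}"
    then show "remove_nth i X \<in> Del 1 0 X"
      unfolding Del_def by (intro CollectI exI[of _ "{i}"] exI[of _ "{}"]) (simp add: del_rc_row)
  qed
qed

lemma Del_0_1: "Del 0 1 X = (\<lambda>j. map (remove_nth j) X) ` {..<ncols X}"
proof
  show "Del 0 1 X \<subseteq> (\<lambda>j. map (remove_nth j) X) ` {..<ncols X}"
    by (auto simp: Del_def subset_lessThan_card_eq_0_iff card_1_singleton_iff del_rc_column)
  show "(\<lambda>j. map (remove_nth j) X) ` {..<ncols X} \<subseteq> Del 0 1 X"
  proof (rule image_subsetI)
    fix j assume "j \<in> {..<ncols X}"
    then show "map (remove_nth j) X \<in> Del 0 1 X"
      unfolding Del_def by (intro CollectI exI[of _ "{}"] exI[of _ "{j}"]) (simp add: del_rc_column)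
  qed
qed

lemma ncols_is_array: "is_array m n X \<Longrightarrow> m \<noteq> 0 \<Longrightarrow> ncols X = n"
  by (cases X) (auto simp: ncols_def is_array_def)

lemma Del_1_0_Int_nonempty_iff:
  assumes "is_array m n X" "is_array m n Y"
  shows "Del 1 0 X \<inter> Del 1 0 Y \<noteq> {} \<longleftrightarrow>
    (\<exists>i<m. \<exists>j<m. remove_nth i X = remove_nth j Y)"
  using assms unfolding Del_1_0 by (auto simp: nrows_def is_array_def)

lemma Del_0_1_Int_nonempty_iff:
  assumes "is_array m n X" "is_array m n Y" "m \<noteq> 0"
  shows "Del 0 1 X \<inter> Del 0 1 Y \<noteq> {} \<longleftrightarrow>
    (\<exists>i<n. \<exists>j<n. map (remove_nth i) X = map (remove_nth j) Y)"
  using assms unfolding Del_0_1 by (auto simp: ncols_is_array)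

lemma Ins_1_0:
  assumes "is_array m n X" "m \<noteq> 0"
  shows "Ins 1 0 X = {W. is_array (Suc m) n W \<and> (\<exists>i<Suc m. remove_nth i W = X)}"
proof -
  have "nrows X = m" "ncols X = n"
    using assms by (simp_all add: nrows_def is_array_def ncols_is_array)
  moreover have "X \<in> Del 1 0 W \<longleftrightarrow> (\<exists>i<Suc m. remove_nth i W = X)"
    if "is_array (Suc m) n W" for W
    using that unfolding Del_1_0 by (auto simp: nrows_def is_array_def)
  ultimately show ?thesis
    unfolding Ins_def by auto
qed

lemma Ins_0_1:
  assumes "is_array m n X" "m \<noteq> 0"
  shows "Ins 0 1 X = {W. is_array m (Suc n) W \<and> (\<exists>j<Suc n. map (remove_nth j) W = X)}"
proof -
  have "nrows X = m" "ncols X = n"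
    using assms by (simp_all add: nrows_def is_array_def ncols_is_array)
  moreover have "X \<in> Del 0 1 W \<longleftrightarrow> (\<exists>j<Suc n. map (remove_nth j) W = X)"
    if "is_array m (Suc n) W" for W
    using that assms(2) unfolding Del_0_1 by (auto simp: ncols_is_array)
  ultimately show ?thesis
    unfolding Ins_def by auto
qed

lemma Ins_1_0_Int_nonempty:
  assumes X: "is_array m n X" and Y: "is_array m n Y" and "m \<noteq> 0"
    and "i \<le> j" "j < m" "remove_nth i X = remove_nth j Y"
  shows "Ins 1 0 X \<inter> Ins 1 0 Y \<noteq> {}"
proof -
  define W where "W = take (Suc j) X @ drop j Y"
  have "remove_nth (Suc j) W = X" "remove_nth i W = Y"
    using remove_nth_take_Suc_append_drop[OF \<open>i \<le> j\<close> _ _ \<open>remove_nth i X = remove_nth j Y\<close>]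
      X Y \<open>j < m\<close>
    by (simp_all add: W_def is_array_def)
  moreover have "is_array (Suc m) n W"
    using X Y \<open>j < m\<close> by (auto simp: W_def is_array_def dest: in_set_takeD in_set_dropD)
  moreover have "i < Suc m" "Suc j < Suc m"
    using \<open>i \<le> j\<close> \<open>j < m\<close> by simp_all
  ultimately have "W \<in> Ins 1 0 X \<inter> Ins 1 0 Y"
    unfolding Ins_1_0[OF X \<open>m \<noteq> 0\<close>] Ins_1_0[OF Y \<open>m \<noteq> 0\<close>] by blast
  then show ?thesis by blast
qed

lemma Ins_0_1_Int_nonempty:
  assumes X: "is_array m n X" and Y: "is_array m n Y" and "m \<noteq> 0"
    and "i \<le> j" "j < n" and eq: "map (remove_nth i) X = map (remove_nth j) Y"
  shows "Ins 0 1 X \<inter> Ins 0 1 Y \<noteq> {}"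
proof -
  define W where "W = map2 (\<lambda>x y. take (Suc j) x @ drop j y) X Y"
  have rows: "remove_nth (Suc j) (W ! k) = X ! k \<and> remove_nth i (W ! k) = Y ! k" if "k < m" for k
  proof -
    have "remove_nth i (X ! k) = remove_nth j (Y ! k)"
      using arg_cong[OF eq, of "\<lambda>Z. Z ! k"] that X Y by (simp add: is_array_def)
    then show ?thesis
      using remove_nth_take_Suc_append_drop[OF \<open>i \<le> j\<close>, of "X ! k" "Y ! k"] X Y that \<open>j < n\<close>
      by (simp add: W_def is_array_def)
  qed
  have "map (remove_nth (Suc j)) W = X" "map (remove_nth i) W = Y"
    using rows X Y by (auto simp: W_def is_array_def intro!: nth_equalityI)
  moreover have "is_array m (Suc n) W"
    using X Y \<open>j < n\<close> by (auto simp: W_def is_array_def set_zip)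
  moreover have "i < Suc n" "Suc j < Suc n"
    using \<open>i \<le> j\<close> \<open>j < n\<close> by simp_all
  ultimately have "W \<in> Ins 0 1 X \<inter> Ins 0 1 Y"
    unfolding Ins_0_1[OF X \<open>m \<noteq> 0\<close>] Ins_0_1[OF Y \<open>m \<noteq> 0\<close>] by blast
  then show ?thesis by blast
qed

lemma Del_1_0_Int_nonempty_iff_Ins_1_0_Int_nonempty:
  assumes X: "is_array m n X" and Y: "is_array m n Y" and "m \<noteq> 0"
  shows "Del 1 0 X \<inter> Del 1 0 Y \<noteq> {} \<longleftrightarrow> Ins 1 0 X \<inter> Ins 1 0 Y \<noteq> {}"
proof
  assume "Del 1 0 X \<inter> Del 1 0 Y \<noteq> {}"
  then obtain i j where "i < m" "j < m" and eq: "remove_nth i X = remove_nth j Y"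
    using Del_1_0_Int_nonempty_iff[OF X Y] by blast
  show "Ins 1 0 X \<inter> Ins 1 0 Y \<noteq> {}"
  proof (cases "i \<le> j")
    case True
    then show ?thesis using Ins_1_0_Int_nonempty[OF X Y \<open>m \<noteq> 0\<close> _ \<open>j < m\<close> eq] by blast
  next
    case False
    then have "Ins 1 0 Y \<inter> Ins 1 0 X \<noteq> {}"
      using Ins_1_0_Int_nonempty[OF Y X \<open>m \<noteq> 0\<close> _ \<open>i < m\<close> eq[symmetric]] by simp
    then show ?thesis by blast
  qed
next
  assume "Ins 1 0 X \<inter> Ins 1 0 Y \<noteq> {}"
  then obtain W i j where W: "is_array (Suc m) n W" and "i < Suc m" "j < Suc m"
    and "remove_nth i W = X" "remove_nth j W = Y"
    unfolding Ins_1_0[OF X \<open>m \<noteq> 0\<close>] Ins_1_0[OF Y \<open>m \<noteq> 0\<close>] by blast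
  have "length W = Suc m"
    using W by (simp add: is_array_def)
  then obtain i' j' where "i' < m" "j' < m"
    "remove_nth i' (remove_nth i W) = remove_nth j' (remove_nth j W)"
    by (metis remove_nth_confluent[OF \<open>i < Suc m\<close> \<open>j < Suc m\<close> \<open>m \<noteq> 0\<close>])
  then show "Del 1 0 X \<inter> Del 1 0 Y \<noteq> {}"
    using Del_1_0_Int_nonempty_iff[OF X Y] \<open>remove_nth i W = X\<close> \<open>remove_nth j W = Y\<close> by blast
qed

lemma Del_0_1_Int_nonempty_iff_Ins_0_1_Int_nonempty:
  assumes X: "is_array m n X" and Y: "is_array m n Y" and "m \<noteq> 0" "n \<noteq> 0"
  shows "Del 0 1 X \<inter> Del 0 1 Y \<noteq> {} \<longleftrightarrow> Ins 0 1 X \<inter> Ins 0 1 Y \<noteq> {}"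
proof
  assume "Del 0 1 X \<inter> Del 0 1 Y \<noteq> {}"
  then obtain i j where "i < n" "j < n" and eq: "map (remove_nth i) X = map (remove_nth j) Y"
    using Del_0_1_Int_nonempty_iff[OF X Y \<open>m \<noteq> 0\<close>] by blast
  show "Ins 0 1 X \<inter> Ins 0 1 Y \<noteq> {}"
  proof (cases "i \<le> j")
    case True
    then show ?thesis using Ins_0_1_Int_nonempty[OF X Y \<open>m \<noteq> 0\<close> _ \<open>j < n\<close> eq] by blast
  next
    case False
    then have "Ins 0 1 Y \<inter> Ins 0 1 X \<noteq> {}"
      using Ins_0_1_Int_nonempty[OF Y X \<open>m \<noteq> 0\<close> _ \<open>i < n\<close> eq[symmetric]] by simp
    then show ?thesis by blast
  qed
next
  assume "Ins 0 1 X \<inter> Ins 0 1 Y \<noteq> {}"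
  then obtain W i j where W: "is_array m (Suc n) W" and "i < Suc n" "j < Suc n"
    and "map (remove_nth i) W = X" "map (remove_nth j) W = Y"
    unfolding Ins_0_1[OF X \<open>m \<noteq> 0\<close>] Ins_0_1[OF Y \<open>m \<noteq> 0\<close>] by blast
  obtain i' j' where "i' < n" "j' < n" and confluent:
    "\<And>r :: bool list. length r = Suc n \<Longrightarrow>
      remove_nth i' (remove_nth i r) = remove_nth j' (remove_nth j r)"
    using remove_nth_confluent[OF \<open>i < Suc n\<close> \<open>j < Suc n\<close> \<open>n \<noteq> 0\<close>] by metis
  have "map (remove_nth i') (map (remove_nth i) W) = map (remove_nth j') (map (remove_nth j) W)"
    unfolding map_map comp_def using W by (intro map_cong refl confluent) (simp add: is_array_def)
  then show "Del 0 1 X \<inter> Del 0 1 Y \<noteq> {}"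
    using Del_0_1_Int_nonempty_iff[OF X Y \<open>m \<noteq> 0\<close>] \<open>i' < n\<close> \<open>j' < n\<close>
      \<open>map (remove_nth i) W = X\<close> \<open>map (remove_nth j) W = Y\<close> by blast
qed

theorem lemma1:
  fixes m :: nat and X Y :: barray
  assumes "m \<ge> 1" and "is_array m m X" and "is_array m m Y"
  shows "(Del 1 0 X \<inter> Del 1 0 Y \<noteq> {} \<longleftrightarrow> Ins 1 0 X \<inter> Ins 1 0 Y \<noteq> {})
       \<and> (Del 0 1 X \<inter> Del 0 1 Y \<noteq> {} \<longleftrightarrow> Ins 0 1 X \<inter> Ins 0 1 Y \<noteq> {})"
  using Del_1_0_Int_nonempty_iff_Ins_1_0_Int_nonempty[OF assms(2,3)]
    Del_0_1_Int_nonempty_iff_Ins_0_1_Int_nonempty[OF assms(2,3)] assms(1)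
  by simp

end
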